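(* Let $M$ be a topological space, $\mathcal{B}(M)$ its Borel $\sigma$-algebra and $\mathfrak{C}$ a quasipoint of $\mathcal{B}(M)$. Then $\mathfrak{C}$ contains some quasipoint $\mathfrak{B}$ of the lattice $\mathcal{T}(M)$ of open subsets of $M$ if and only if $\partial U\notin\mathfrak{C}$ for all open $U\subseteq M$, where $\partial U=\overline{U}\cap\overline{M\setminus U}$.
   Context: $\mathcal{T}(M)$ has operations $U\wedge V=U\cap V$, $U\vee V=U\cup V$. A quasipoint in a lattice $\mathbb{L}$ with least element $0$ is a maximal (w.r.t. inclusion) subset $\mathfrak{B}\subseteq\mathbb{L}$ such that $\mathfrak{B}\neq\emptyset$, $0\notin\mathfrak{B}$, and for all $a,b\in\mathfrak{B}$ there is $c\in\mathfrak{B}$ with $c\le a\wedge b$. *)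

theory Defs
  imports "HOL-Analysis.Analysis"
begin

text \<open>A lattice of sets L (ordered by inclusion, meet = intersection, least element the
empty set).  A filter-base-like subset: nonempty, avoids the least element, downward directed.\<close>
definition pre_quasipoint :: "'a set set \<Rightarrow> 'a set set \<Rightarrow> bool" where
  "pre_quasipoint L B \<longleftrightarrow> B \<subseteq> L \<and> B \<noteq> {} \<and> {} \<notin> B \<and>
     (\<forall>a\<in>B. \<forall>b\<in>B. \<exists>c\<in>B. c \<subseteq> a \<inter> b)"

definition quasipoint :: "'a set set \<Rightarrow> 'a set set \<Rightarrow> bool" where
  "quasipoint L B \<longleftrightarrow> pre_quasipoint L B \<and>
     (\<forall>B'. pre_quasipoint L B' \<and> B \<subseteq> B' \<longrightarrow> B' = B)"

definition open_sets :: "'a topology \<Rightarrow> 'a set set" where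
  "open_sets X = {U. openin X U}"

definition borel_sets :: "'a topology \<Rightarrow> 'a set set" where
  "borel_sets X = sigma_sets (topspace X) {U. openin X U}"

definition top_boundary :: "'a topology \<Rightarrow> 'a set \<Rightarrow> 'a set" where
  "top_boundary X U = X closure_of U \<inter> X closure_of (topspace X - U)"

end

theory Submission
  imports Defs
begin

text \<open>A quasipoint of a lattice of sets closed under intersection is upward closed and decides
every element A: either A belongs to it or some member misses A. For the Borel sets this makes
a quasipoint prime, so for open U it contains U, the boundary of U, or the exterior of U.
If a quasipoint B of the open sets lies in C, then U or a member of B disjoint from U belongs
to C, and both miss the boundary of U. Conversely, if C contains no boundary, then the open
members of C form a quasipoint of the open sets: an open W outside C leaves its exterior in C,
which a filter base containing W cannot also contain.\<close>

lemma pre_quasipoint_Int_ne_empty: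
  assumes "pre_quasipoint L B" "a \<in> B" "b \<in> B"
  shows "a \<inter> b \<noteq> {}"
proof -
  obtain c where "c \<in> B" "c \<subseteq> a \<inter> b"
    using assms unfolding pre_quasipoint_def by blast
  moreover have "c \<noteq> {}"
    using assms(1) \<open>c \<in> B\<close> unfolding pre_quasipoint_def by blast
  ultimately show ?thesis
    by blast
qed

lemma pre_quasipoint_upclosure:
  assumes "pre_quasipoint L B"
  shows "pre_quasipoint L {x \<in> L. \<exists>b\<in>B. b \<subseteq> x}"
  unfolding pre_quasipoint_def
proof (intro conjI ballI)
  show "{x \<in> L. \<exists>b\<in>B. b \<subseteq> x} \<noteq> {}" "{} \<notin> {x \<in> L. \<exists>b\<in>B. b \<subseteq> x}"
    using assms unfolding pre_quasipoint_def by (blast, auto)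
  fix x y assume "x \<in> {x \<in> L. \<exists>b\<in>B. b \<subseteq> x}" "y \<in> {x \<in> L. \<exists>b\<in>B. b \<subseteq> x}"
  then obtain a b where "a \<in> B" "a \<subseteq> x" "b \<in> B" "b \<subseteq> y"
    by blast
  then obtain c where "c \<in> B" "c \<subseteq> x \<inter> y"
    using assms unfolding pre_quasipoint_def by blast
  then show "\<exists>c\<in>{x \<in> L. \<exists>b\<in>B. b \<subseteq> x}. c \<subseteq> x \<inter> y"
    using assms unfolding pre_quasipoint_def by blast
qed simp

lemma quasipoint_upclosed:
  assumes "quasipoint L B" "b \<in> B" "b \<subseteq> x" "x \<in> L"
  shows "x \<in> B"
proof -
  let ?B' = "{x \<in> L. \<exists>b\<in>B. b \<subseteq> x}"
  have "B \<subseteq> ?B'"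
    using assms(1) unfolding quasipoint_def pre_quasipoint_def by blast
  then have "?B' = B"
    using assms(1) pre_quasipoint_upclosure unfolding quasipoint_def by blast
  then show ?thesis
    using assms(2-4) by blast
qed

lemma quasipoint_Int_mem:
  assumes "quasipoint L B" "a \<in> B" "b \<in> B" "a \<inter> b \<in> L"
  shows "a \<inter> b \<in> B"
proof -
  obtain c where "c \<in> B" "c \<subseteq> a \<inter> b"
    using assms(1-3) unfolding quasipoint_def pre_quasipoint_def by blast
  then show ?thesis
    using assms(1,4) quasipoint_upclosed by blast
qed

lemma quasipoint_mem_or_disjoint:
  assumes Int_closed: "\<And>a b. a \<in> L \<Longrightarrow> b \<in> L \<Longrightarrow> a \<inter> b \<in> L"
    and qp: "quasipoint L B" and "A \<in> L"
  shows "A \<in> B \<or> (\<exists>b\<in>B. A \<inter> b = {})"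
proof (rule disjCI)
  assume "\<not> (\<exists>b\<in>B. A \<inter> b = {})"
  then have meets: "A \<inter> b \<noteq> {}" if "b \<in> B" for b
    using that by blast
  have pre: "pre_quasipoint L B"
    using qp unfolding quasipoint_def by blast
  let ?A_B = "(\<inter>) A ` B"
  let ?B' = "{x \<in> L. \<exists>b\<in>?A_B. b \<subseteq> x}"
  have "pre_quasipoint L ?A_B"
    unfolding pre_quasipoint_def
  proof (intro conjI ballI)
    show "?A_B \<subseteq> L"
      using pre \<open>A \<in> L\<close> Int_closed unfolding pre_quasipoint_def by blast
    show "?A_B \<noteq> {}"
      using pre unfolding pre_quasipoint_def by blast
    show "{} \<notin> ?A_B"
      using meets by force
    fix x y assume "x \<in> ?A_B" "y \<in> ?A_B"
    then obtain a b where "a \<in> B" "x = A \<inter> a" "b \<in> B" "y = A \<inter> b"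
      by blast
    moreover obtain c where "c \<in> B" "c \<subseteq> a \<inter> b"
      using pre \<open>a \<in> B\<close> \<open>b \<in> B\<close> unfolding pre_quasipoint_def by blast
    ultimately have "A \<inter> c \<in> ?A_B" "A \<inter> c \<subseteq> x \<inter> y"
      by auto
    then show "\<exists>c\<in>?A_B. c \<subseteq> x \<inter> y"
      by blast
  qed
  then have "pre_quasipoint L ?B'"
    by (rule pre_quasipoint_upclosure)
  moreover have "B \<subseteq> ?B'"
    using pre unfolding pre_quasipoint_def by auto
  ultimately have "?B' = B"
    using qp unfolding quasipoint_def by blast
  moreover have "A \<in> ?B'"
    using pre \<open>A \<in> L\<close> unfolding pre_quasipoint_def by auto
  ultimately show "A \<in> B"
    by simp
qed

lemma (in algebra) quasipoint_space_mem:
  assumes "quasipoint M C"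
  shows "\<Omega> \<in> C"
proof -
  obtain c where "c \<in> C" "c \<in> M"
    using assms unfolding quasipoint_def pre_quasipoint_def by blast
  then show ?thesis
    using assms quasipoint_upclosed sets_into_space by blast
qed

lemma (in algebra) quasipoint_Un_mem:
  assumes qp: "quasipoint M C" and "A \<in> M" "A' \<in> M" "A \<union> A' \<in> C"
  shows "A \<in> C \<or> A' \<in> C"
proof (rule ccontr)
  assume "\<not> (A \<in> C \<or> A' \<in> C)"
  then obtain b b' where "b \<in> C" "A \<inter> b = {}" "b' \<in> C" "A' \<inter> b' = {}"
    using quasipoint_mem_or_disjoint[OF Int qp \<open>A \<in> M\<close>]
      quasipoint_mem_or_disjoint[OF Int qp \<open>A' \<in> M\<close>] by blast
  moreover obtain c where "c \<in> C" "c \<subseteq> b \<inter> b'"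
    using qp \<open>b \<in> C\<close> \<open>b' \<in> C\<close> unfolding quasipoint_def pre_quasipoint_def by blast
  ultimately have "c \<inter> (A \<union> A') = {}"
    by blast
  moreover have "pre_quasipoint M C"
    using qp unfolding quasipoint_def by blast
  ultimately show False
    using pre_quasipoint_Int_ne_empty \<open>c \<in> C\<close> \<open>A \<union> A' \<in> C\<close> by blast
qed

lemma sigma_algebra_borel_sets: "sigma_algebra (topspace X) (borel_sets X)"
  unfolding borel_sets_def by (rule sigma_algebra_sigma_sets) (auto dest: openin_subset)

lemma borel_sets_openin: "openin X U \<Longrightarrow> U \<in> borel_sets X"
  unfolding borel_sets_def by (rule sigma_sets.Basic) simp

lemma borel_sets_closedin:
  assumes "closedin X F"
  shows "F \<in> borel_sets X"
proof -
  interpret sigma_algebra "topspace X" "borel_sets X"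
    by (rule sigma_algebra_borel_sets)
  have "topspace X - (topspace X - F) \<in> borel_sets X"
    using assms by (intro compl_sets borel_sets_openin) (simp add: closedin_def)
  then show ?thesis
    using closedin_subset[OF assms] by (simp add: Diff_Diff_Int Int_absorb1)
qed

lemma top_boundary_openin:
  assumes "openin X U"
  shows "top_boundary X U = X closure_of U - U"
proof -
  have "X closure_of (topspace X - U) = topspace X - U"
    using assms by (simp add: closure_of_eq closedin_diff)
  then show ?thesis
    unfolding top_boundary_def using closure_of_subset_topspace[of X U] by blast
qed

lemma quasipoint_borel_sets_openin_cases:
  assumes qp: "quasipoint (borel_sets X) C" and "openin X W"
  shows "W \<in> C \<or> top_boundary X W \<in> C \<or> topspace X - X closure_of W \<in> C"
proof -
  interpret sigma_algebra "topspace X" "borel_sets X"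
    by (rule sigma_algebra_borel_sets)
  have W: "W \<in> borel_sets X"
    using \<open>openin X W\<close> by (rule borel_sets_openin)
  have bd: "top_boundary X W \<in> borel_sets X"
    unfolding top_boundary_def by (intro borel_sets_closedin closedin_Int) auto
  have ext: "topspace X - X closure_of W \<in> borel_sets X"
    by (intro borel_sets_openin openin_diff) auto
  have "W \<subseteq> X closure_of W" "X closure_of W \<subseteq> topspace X"
    using \<open>openin X W\<close> by (simp_all add: closure_of_subset openin_subset closure_of_subset_topspace)
  then have "topspace X = W \<union> (top_boundary X W \<union> (topspace X - X closure_of W))"
    unfolding top_boundary_openin[OF \<open>openin X W\<close>] by blast
  then have "W \<union> (top_boundary X W \<union> (topspace X - X closure_of W)) \<in> C"
    using quasipoint_space_mem[OF qp] by simp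
  then show ?thesis
    using quasipoint_Un_mem[OF qp] W bd ext by blast
qed

lemma quasipoint_open_sets_disjoint_boundary:
  assumes qp: "quasipoint (open_sets X) B" and "openin X U"
  shows "\<exists>b\<in>B. b \<inter> top_boundary X U = {}"
proof -
  have "U \<in> B \<or> (\<exists>b\<in>B. U \<inter> b = {})"
    using \<open>openin X U\<close>
    by (intro quasipoint_mem_or_disjoint[OF _ qp]) (auto simp: open_sets_def)
  then show ?thesis
  proof
    assume "U \<in> B"
    then show ?thesis
      unfolding top_boundary_openin[OF \<open>openin X U\<close>] by blast
  next
    assume "\<exists>b\<in>B. U \<inter> b = {}"
    then obtain b where "b \<in> B" "U \<inter> b = {}"
      by blast
    moreover have "openin X b"
      using qp \<open>b \<in> B\<close> unfolding quasipoint_def pre_quasipoint_def open_sets_def by blast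
    ultimately have "b \<inter> X closure_of U = {}"
      by (simp add: openin_Int_closure_of_eq_empty Int_commute)
    then show ?thesis
      unfolding top_boundary_openin[OF \<open>openin X U\<close>] using \<open>b \<in> B\<close> by blast
  qed
qed

lemma quasipoint_open_sets_trace:
  assumes qp: "quasipoint (borel_sets X) C"
    and no_boundary: "\<And>U. openin X U \<Longrightarrow> top_boundary X U \<notin> C"
  shows "quasipoint (open_sets X) (C \<inter> open_sets X)"
proof -
  interpret sigma_algebra "topspace X" "borel_sets X"
    by (rule sigma_algebra_borel_sets)
  have pre: "pre_quasipoint (open_sets X) (C \<inter> open_sets X)"
    unfolding pre_quasipoint_def
  proof (intro conjI ballI)
    show "C \<inter> open_sets X \<noteq> {}"
      using quasipoint_space_mem[OF qp] by (auto simp: open_sets_def)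
    show "{} \<notin> C \<inter> open_sets X"
      using qp unfolding quasipoint_def pre_quasipoint_def by blast
    fix a b assume "a \<in> C \<inter> open_sets X" "b \<in> C \<inter> open_sets X"
    then have "openin X (a \<inter> b)"
      by (simp add: open_sets_def openin_Int)
    then have "a \<inter> b \<in> C \<inter> open_sets X"
      using quasipoint_Int_mem[OF qp _ _ borel_sets_openin] \<open>a \<in> C \<inter> open_sets X\<close>
        \<open>b \<in> C \<inter> open_sets X\<close> by (simp add: open_sets_def)
    then show "\<exists>c\<in>C \<inter> open_sets X. c \<subseteq> a \<inter> b"
      by blast
  qed simp
  have "B' \<subseteq> C \<inter> open_sets X"
    if pre': "pre_quasipoint (open_sets X) B'" and sub: "C \<inter> open_sets X \<subseteq> B'" for B'
  proof
    fix W assume "W \<in> B'"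
    then have "openin X W"
      using pre' unfolding pre_quasipoint_def open_sets_def by blast
    have "topspace X - X closure_of W \<notin> C"
    proof
      assume "topspace X - X closure_of W \<in> C"
      then have "topspace X - X closure_of W \<in> B'"
        using sub by (auto simp: open_sets_def openin_diff)
      moreover have "W \<inter> (topspace X - X closure_of W) = {}"
        using closure_of_subset[OF openin_subset[OF \<open>openin X W\<close>]] by blast
      ultimately show False
        using pre_quasipoint_Int_ne_empty[OF pre' \<open>W \<in> B'\<close>] by blast
    qed
    then have "W \<in> C"
      using quasipoint_borel_sets_openin_cases[OF qp \<open>openin X W\<close>] no_boundary[OF \<open>openin X W\<close>]
      by blast
    then show "W \<in> C \<inter> open_sets X"
      using \<open>openin X W\<close> by (simp add: open_sets_def)
  qed
  then show ?thesis
    using pre unfolding quasipoint_def by blast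
qed

theorem proposition3p45:
  fixes X :: "'a topology" and C :: "'a set set"
  assumes "quasipoint (borel_sets X) C"
  shows "(\<exists>B. quasipoint (open_sets X) B \<and> B \<subseteq> C) \<longleftrightarrow>
         (\<forall>U. openin X U \<longrightarrow> top_boundary X U \<notin> C)"
proof
  assume "\<exists>B. quasipoint (open_sets X) B \<and> B \<subseteq> C"
  then obtain B where "quasipoint (open_sets X) B" "B \<subseteq> C"
    by blast
  show "\<forall>U. openin X U \<longrightarrow> top_boundary X U \<notin> C"
  proof (intro allI impI notI)
    fix U assume "openin X U" "top_boundary X U \<in> C"
    obtain b where "b \<in> B" "b \<inter> top_boundary X U = {}"
      using quasipoint_open_sets_disjoint_boundary[OF \<open>quasipoint (open_sets X) B\<close> \<open>openin X U\<close>]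
      by blast
    then show False
      using pre_quasipoint_Int_ne_empty[of _ C b "top_boundary X U"] assms \<open>B \<subseteq> C\<close>
        \<open>top_boundary X U \<in> C\<close>
      unfolding quasipoint_def by blast
  qed
next
  assume "\<forall>U. openin X U \<longrightarrow> top_boundary X U \<notin> C"
  then have "quasipoint (open_sets X) (C \<inter> open_sets X)"
    using quasipoint_open_sets_trace[OF assms] by blast
  then show "\<exists>B. quasipoint (open_sets X) B \<and> B \<subseteq> C"
    by blast
qed

end
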